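(* Let $n,r\in\mathbb N$ be positive integers, $\mathbf p\in\mathcal P_n$, and $\mathbf Z=(Z_1,\dots,Z_n)\sim\mathrm{Multinomial}(nr,\mathbf p)$. Then for every $\mu>0$, $$\mathbb P\Big[D\Big(\tfrac{\mathbf Z}{nr}\,\Big\|\,\mathbf p\Big)\ge\frac{\Delta(r)+\mu}{r}\Big]\le\sqrt{2\pi e\, n r}\;e^{-n\mu}.$$
   Context: $\mathcal P_n=\{(p_1,\dots,p_n):p_i\ge0,\sum_ip_i=1\}$. $D(\mathbf q\|\mathbf p)=\sum_i q_i\log(q_i/p_i)$ is the Kullback–Leibler divergence with natural logarithms and $0\log 0=0$. $\Psi(t)=(1+t)\log(1+t)-t\log t$ for $t>0$, $\zeta$ is the Riemann zeta function, and $\Delta(r)=\inf_{q>2}\big\{(1-\frac1q)\Psi(r)+\frac1q\log[1+(2\pi)^{-q/2}\zeta(q/2)]\big\}$. *)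

theory Defs
  imports "HOL-Analysis.Analysis"
begin

definition prob_simplex :: "nat \<Rightarrow> (nat \<Rightarrow> real) \<Rightarrow> bool" where
  "prob_simplex n p \<longleftrightarrow> (\<forall>i<n. p i \<ge> 0) \<and> (\<Sum>i<n. p i) = 1"

definition multinomial_support :: "nat \<Rightarrow> nat \<Rightarrow> (nat \<Rightarrow> nat) set" where
  "multinomial_support n N = {z. (\<forall>i. n \<le> i \<longrightarrow> z i = 0) \<and> (\<Sum>i<n. z i) = N}"

definition multinomial_pmf :: "nat \<Rightarrow> nat \<Rightarrow> (nat \<Rightarrow> real) \<Rightarrow> (nat \<Rightarrow> nat) \<Rightarrow> real" where
  "multinomial_pmf n N p z = fact N / (\<Prod>i<n. fact (z i)) * (\<Prod>i<n. p i ^ z i)"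

definition multinomial_prob :: "nat \<Rightarrow> nat \<Rightarrow> (nat \<Rightarrow> real) \<Rightarrow> ((nat \<Rightarrow> nat) \<Rightarrow> bool) \<Rightarrow> real" where
  "multinomial_prob n N p E = (\<Sum>z\<in>{z\<in>multinomial_support n N. E z}. multinomial_pmf n N p z)"

definition kl_div :: "nat \<Rightarrow> (nat \<Rightarrow> real) \<Rightarrow> (nat \<Rightarrow> real) \<Rightarrow> real" where
  "kl_div n q p = (\<Sum>i<n. if q i = 0 then 0 else q i * ln (q i / p i))"

definition Psi :: "real \<Rightarrow> real" where
  "Psi t = (1 + t) * ln (1 + t) - t * ln t"

definition zeta_real :: "real \<Rightarrow> real" where
  "zeta_real s = (\<Sum>k. 1 / (real (Suc k)) powr s)"

definition Delta :: "real \<Rightarrow> real" where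
  "Delta r = Inf ((\<lambda>q. (1 - 1/q) * Psi r + (1/q) * ln (1 + (2*pi) powr (-q/2) * zeta_real (q/2))) ` {2<..})"

end

(*
  Write N = n r and a k = k^k e^(-k) / k!.  For every outcome z of the multinomial vector,
  P[Z = z] <= (N! e^N / N^N) exp (-N D(z/N || p)) prod_i a (z i), with equality unless some
  p i = 0 < z i.  On the event D >= c = (Delta r + mu) / r the exponential is at most
  e^(-N c), and the remaining sum of prod_i a (z i) over all compositions z of N is bounded
  by exponential tilting: multiplying by w^(z i), whose product is w^N, and dropping the
  constraint sum_i z i = N gives (sum_k a k w^k)^n / w^N.  Hoelder's inequality with
  exponents q and q/(q-1), the Stirling bound a k <= (2 pi k)^(-1/2) (which produces the
  zeta value) and a geometric series with ratio r/(1+r) bound this by exp (n F_q(r)), where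
  F_q(r) = Delta_term r q and Delta r is the infimum of F_q(r) over q > 2; as
  N c = n (Delta r + mu), passing to the infimum leaves e^(-n mu).  Finally
  N! e^N / N^N <= e sqrt N <= sqrt (2 pi e N).

  Both Stirling bounds come from the sequence ln k! + k - (k + 1/2) ln k, which decreases,
  is bounded below, and converges to ln (2 pi) / 2 by Wallis' product.
*)
theory Submission
  imports Defs "HOL-Real_Asymp.Real_Asymp"
begin

section \<open>Stirling's bounds for the factorial\<close>

lemma ln_ratio_bounds:
  fixes u :: real assumes u: "0 \<le> u" "u < 1"
  shows "2*u \<le> ln (1 + u) - ln (1 - u)"
    and "ln (1 + u) - ln (1 - u) \<le> 2*u + (2/3) * u^3 / (1 - u^2)"
proof -
  define g where "g x = ln (1 + x) - ln (1 - x) - 2*x" for x :: real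
  have g': "DERIV g x :> 2 * x^2 / (1 - x^2)" and sq_less: "x^2 < 1" if "0 \<le> x" "x \<le> u" for x
  proof -
    have "1 + x > 0" "1 - x > 0" using that u by auto
    then show "DERIV g x :> 2 * x^2 / (1 - x^2)"
      unfolding g_def by (auto intro!: derivative_eq_intros simp: field_simps power2_eq_square)
    show "x^2 < 1" using that u by (simp add: abs_square_less_1)
  qed
  have "g 0 \<le> g u"
  proof (rule DERIV_nonneg_imp_nondecreasing[OF u(1)])
    fix x assume "0 \<le> x" "x \<le> u"
    then show "\<exists>y. DERIV g x :> y \<and> y \<ge> 0" using g' sq_less by force
  qed
  then show "2*u \<le> ln (1 + u) - ln (1 - u)" by (simp add: g_def)
  define a where "a = 2 / (1 - u^2)"
  define h where "h x = a/3 * x^3 - g x" for x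
  have "h 0 \<le> h u"
  proof (rule DERIV_nonneg_imp_nondecreasing[OF u(1)])
    fix x assume x: "0 \<le> x" "x \<le> u"
    then have "x^2 \<le> u^2" by (simp add: power_mono)
    then have "2 * x^2 / (1 - x^2) \<le> 2 * x^2 / (1 - u^2)"
      using sq_less[OF x] sq_less[of u] u by (intro divide_left_mono) auto
    also have "\<dots> = a * x^2" by (simp add: a_def)
    finally have "2 * x^2 / (1 - x^2) \<le> a * x^2" .
    moreover have "DERIV h x :> a * x^2 - 2 * x^2 / (1 - x^2)"
      unfolding h_def by (auto intro!: derivative_eq_intros g'[OF x])
    ultimately show "\<exists>y. DERIV h x :> y \<and> y \<ge> 0" by force
  qed
  then show "ln (1 + u) - ln (1 - u) \<le> 2*u + (2/3) * u^3 / (1 - u^2)"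
    by (simp add: h_def g_def a_def mult.commute)
qed

definition stirling_rem :: "nat \<Rightarrow> real" where
  "stirling_rem n = ln (fact n) + real n - (real n + 1/2) * ln (real n)"

lemma fact_eq_stirling_rem:
  assumes "n \<ge> 1"
  shows "fact n = exp (stirling_rem n) * sqrt (real n) * real n ^ n / exp (real n)"
proof -
  have "real n powr (real n + 1/2) = real n ^ n * sqrt (real n)"
    using assms by (simp add: powr_add powr_realpow powr_half_sqrt)
  moreover have "fact n = exp (stirling_rem n - real n + (real n + 1/2) * ln (real n))"
    unfolding stirling_rem_def by simp
  ultimately show ?thesis
    using assms by (simp add: exp_add exp_diff powr_def mult_ac)
qed

lemma stirling_rem_Suc_bounds:
  assumes "n \<ge> 1"
  shows "stirling_rem (Suc n) \<le> stirling_rem n"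
    and "stirling_rem n - 1 / (12 * real n) \<le> stirling_rem (Suc n) - 1 / (12 * real (Suc n))"
proof -
  define m where "m = real n"
  define u where "u = 1 / (2*m + 1)"
  have m: "m \<ge> 1" using assms by (simp add: m_def)
  have u: "0 < u" "u < 1" "(2*m + 1) * u = 1" using m by (auto simp: u_def)
  then have "m * (1 + u) = (m + 1) * (1 - u)" by (simp add: algebra_simps)
  then have "ln (m * (1 + u)) = ln ((m + 1) * (1 - u))" by simp
  then have ln_ratio: "ln (1 + u) - ln (1 - u) = ln (m + 1) - ln m"
    using m u by (simp add: ln_mult)
  have "ln (fact (Suc n)) = ln (m + 1) + ln (fact n)"
    by (simp add: m_def ln_mult add.commute)
  then have diff:
    "stirling_rem n - stirling_rem (Suc n) = (m + 1/2) * (ln (1 + u) - ln (1 - u)) - 1"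
    unfolding ln_ratio by (simp add: stirling_rem_def m_def algebra_simps)
  have "1 = (m + 1/2) * (2*u)" using u by (simp add: algebra_simps)
  also have "\<dots> \<le> (m + 1/2) * (ln (1 + u) - ln (1 - u))"
    using ln_ratio_bounds(1)[of u] u m by (intro mult_left_mono) auto
  finally show "stirling_rem (Suc n) \<le> stirling_rem n"
    using diff by simp
  have "(m + 1/2) * (ln (1 + u) - ln (1 - u))
      \<le> (m + 1/2) * (2*u + (2/3) * u^3 / (1 - u^2))"
    using ln_ratio_bounds(2)[of u] u m by (intro mult_left_mono) auto
  also have "\<dots> = (m + 1/2) * (2*u + (2/3) * (u / (4 * m * (m + 1))))"
  proof -
    have "1 - u^2 = 4 * m * (m + 1) * u^2"
      using u(3) by algebra
    then have "u^3 / (1 - u^2) = u / (4 * m * (m + 1))"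
      using m u by (simp add: power2_eq_square power3_eq_cube)
    then show ?thesis by (simp only: times_divide_eq_right[symmetric])
  qed
  also have "\<dots> = (2*m + 1) * u * (1 + 1 / (12 * m * (m + 1)))"
    by (simp add: algebra_simps)
  also have "\<dots> = 1 + 1 / (12 * m * (m + 1))"
    using u(3) by simp
  also have "1 / (12 * m * (m + 1)) = 1 / (12 * m) - 1 / (12 * (m + 1))"
    using m by (simp add: field_simps)
  finally show
    "stirling_rem n - 1 / (12 * real n) \<le> stirling_rem (Suc n) - 1 / (12 * real (Suc n))"
    using diff by (simp add: m_def add.commute)
qed

lemma decseq_stirling_rem: "decseq (\<lambda>k. stirling_rem (Suc k))"
  by (rule decseq_SucI) (simp add: stirling_rem_Suc_bounds(1))

lemma stirling_rem_Suc_ge: "11/12 \<le> stirling_rem (Suc k)"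
proof -
  have inc: "incseq (\<lambda>k. stirling_rem (Suc k) - 1 / (12 * real (Suc k)))"
    by (intro incseq_SucI stirling_rem_Suc_bounds(2)) simp
  have "stirling_rem 1 - 1/12 \<le> stirling_rem (Suc k) - 1 / (12 * real (Suc k))"
    using incseqD[OF inc, of 0 k] by simp
  moreover have "stirling_rem 1 = 1" by (simp add: stirling_rem_def)
  moreover have "0 \<le> 1 / (12 * real (Suc k))" by simp
  ultimately show ?thesis by linarith
qed

lemma wallis_partial_product:
  "(\<Prod>k=1..n. 4 * real k ^ 2 / (4 * real k ^ 2 - 1))
     = (2^n * fact n) ^ 4 / (fact (2*n) ^ 2 * (2 * real n + 1))"
proof (induction n)
  case (Suc n)
  define m where "m = real n"
  have step: "A^4 / (F^2 * a) * (4 * c^2 / (a * b)) = (2 * c * A)^4 / ((2 * c * a * F)^2 * b)"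
    if "a > 0" "b > 0" "c > 0" "F > 0" for A F a b c :: real
    using that by (simp add: field_simps power2_eq_square power4_eq_xxxx)
  have "(\<Prod>k=1..Suc n. 4 * real k ^ 2 / (4 * real k ^ 2 - 1))
      = (2^n * fact n) ^ 4 / (fact (2*n) ^ 2 * (2*m + 1))
        * (4 * (m + 1)^2 / ((2*m + 1) * (2*m + 3)))"
    using Suc.IH by (simp add: m_def algebra_simps power2_eq_square)
  also have "\<dots> = (2 * (m + 1) * (2^n * fact n)) ^ 4
                    / ((2 * (m + 1) * (2*m + 1) * fact (2*n))^2 * (2*m + 3))"
    by (rule step) (simp_all add: m_def add_pos_nonneg)
  also have "\<dots> = (2^Suc n * fact (Suc n)) ^ 4
                    / (fact (2 * Suc n) ^ 2 * (2 * real (Suc n) + 1))"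
    by (simp add: m_def algebra_simps)
  finally show ?case .
qed simp

lemma ln_wallis_partial_product:
  assumes "n \<ge> 1"
  shows "ln (\<Prod>k=1..n. 4 * real k ^ 2 / (4 * real k ^ 2 - 1))
       = 4 * stirling_rem n - 2 * stirling_rem (2*n) + ln (real n / (2 * (2 * real n + 1)))"
proof -
  define m where "m = real n"
  have m: "m \<ge> 1" using assms by (simp add: m_def)
  have fact_n: "ln (fact n) = stirling_rem n - m + (m + 1/2) * ln m"
    by (simp add: stirling_rem_def m_def)
  have fact_2n: "ln (fact (2*n)) = stirling_rem (2*n) - 2*m + (2*m + 1/2) * (ln 2 + ln m)"
    using m by (simp add: stirling_rem_def m_def ln_mult)
  have "ln ((2^n * fact n)^4 / (fact (2*n)^2 * (2*m + 1)))
      = 4 * (m * ln 2 + ln (fact n)) - 2 * ln (fact (2*n)) - ln (2*m + 1)"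
    using m by (simp add: ln_div ln_mult ln_realpow m_def)
  also have "\<dots> = 4 * stirling_rem n - 2 * stirling_rem (2*n) + (ln m - ln 2 - ln (2*m + 1))"
    unfolding fact_n fact_2n by (simp add: algebra_simps)
  also have "ln m - ln 2 - ln (2*m + 1) = ln (m / (2 * (2*m + 1)))"
    using m ln_mult[of 2 "2*m + 1"] by (simp add: ln_div)
  finally show ?thesis
    unfolding wallis_partial_product m_def .
qed

lemma stirling_rem_tendsto: "stirling_rem \<longlonglongrightarrow> ln (2*pi) / 2"
proof -
  obtain L where "(\<lambda>k. stirling_rem (Suc k)) \<longlonglongrightarrow> L"
    using decseq_convergent[OF decseq_stirling_rem] stirling_rem_Suc_ge by blast
  then have "stirling_rem \<longlonglongrightarrow> L"
    by (simp add: filterlim_sequentially_Suc)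
  moreover have "(\<lambda>n. stirling_rem (2*n)) \<longlonglongrightarrow> L"
    using LIMSEQ_subseq_LIMSEQ[OF \<open>stirling_rem \<longlonglongrightarrow> L\<close>, of "\<lambda>n. 2*n"]
    by (simp add: strict_mono_def o_def)
  moreover have "(\<lambda>n. ln (real n / (2 * (2 * real n + 1)))) \<longlonglongrightarrow> ln (1/4)"
    by real_asymp
  ultimately have "(\<lambda>n. 4 * stirling_rem n - 2 * stirling_rem (2*n)
                      + ln (real n / (2 * (2 * real n + 1)))) \<longlonglongrightarrow> 4*L - 2*L + ln (1/4)"
    by (intro tendsto_add tendsto_diff tendsto_mult_left)
  moreover have "(\<lambda>n. ln (\<Prod>k=1..n. 4 * real k ^ 2 / (4 * real k ^ 2 - 1))) \<longlonglongrightarrow> ln (pi/2)"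
    by (intro tendsto_intros wallis) simp
  then have "(\<lambda>n. 4 * stirling_rem n - 2 * stirling_rem (2*n)
                 + ln (real n / (2 * (2 * real n + 1)))) \<longlonglongrightarrow> ln (pi/2)"
  proof (rule Lim_transform_eventually)
    show "\<forall>\<^sub>F n in sequentially. ln (\<Prod>k=1..n. 4 * real k ^ 2 / (4 * real k ^ 2 - 1))
        = 4 * stirling_rem n - 2 * stirling_rem (2*n) + ln (real n / (2 * (2 * real n + 1)))"
      using eventually_ge_at_top[of 1] by eventually_elim (rule ln_wallis_partial_product)
  qed
  ultimately have "ln (pi/2) = 2*L + ln (1/4)"
    using LIMSEQ_unique by fastforce
  moreover have "ln (4::real) = 2 * ln 2"
    using ln_realpow[of 2 2] by simp
  ultimately have "L = ln (2*pi) / 2"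
    by (simp add: ln_div ln_mult)
  with \<open>stirling_rem \<longlonglongrightarrow> L\<close> show ?thesis by simp
qed

lemma fact_ge_stirling:
  assumes "n \<ge> 1"
  shows "sqrt (2*pi*real n) * real n ^ n / exp (real n) \<le> fact n"
proof -
  have "ln (2*pi) / 2 \<le> stirling_rem n"
    using decseq_ge[OF decseq_stirling_rem LIMSEQ_Suc[OF stirling_rem_tendsto], of "n - 1"] assms
    by simp
  moreover have "sqrt (2*pi) = exp (ln (2*pi) / 2)"
    by (simp add: powr_half_sqrt[symmetric] powr_def)
  ultimately have "sqrt (2*pi) \<le> exp (stirling_rem n)"
    by simp
  then have "sqrt (2*pi) * (sqrt (real n) * real n ^ n / exp (real n))
      \<le> exp (stirling_rem n) * (sqrt (real n) * real n ^ n / exp (real n))"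
    by (intro mult_right_mono) auto
  then show ?thesis
    unfolding fact_eq_stirling_rem[OF assms] by (simp add: real_sqrt_mult mult_ac)
qed

lemma fact_le_stirling:
  assumes "n \<ge> 1"
  shows "fact n \<le> exp 1 * sqrt (real n) * real n ^ n / exp (real n)"
proof -
  have "stirling_rem n \<le> stirling_rem 1"
    using decseqD[OF decseq_stirling_rem, of 0 "n - 1"] assms by simp
  then show ?thesis
    unfolding fact_eq_stirling_rem[OF assms]
    by (auto simp: stirling_rem_def intro!: divide_right_mono mult_right_mono)
qed

section \<open>Tilted sums over the multinomial support\<close>

lemma Holder_inequality_sum:
  fixes f g :: "'a \<Rightarrow> real" and p q :: real
  assumes "finite K"
    and f: "\<And>k. k \<in> K \<Longrightarrow> f k \<ge> 0" and g: "\<And>k. k \<in> K \<Longrightarrow> g k \<ge> 0"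
    and pq: "p > 1" "q > 1" "1/p + 1/q = 1"
  shows "(\<Sum>k\<in>K. f k * g k)
           \<le> (\<Sum>k\<in>K. f k powr p) powr (1/p) * (\<Sum>k\<in>K. g k powr q) powr (1/q)"
proof -
  define A where "A = (\<Sum>k\<in>K. f k powr p)"
  define B where "B = (\<Sum>k\<in>K. g k powr q)"
  show ?thesis
  proof (cases "A = 0 \<or> B = 0")
    case True
    then have "(\<forall>k\<in>K. f k = 0) \<or> (\<forall>k\<in>K. g k = 0)"
      using \<open>finite K\<close> by (auto simp: A_def B_def sum_nonneg_eq_0_iff)
    then show ?thesis by auto
  next
    case False
    then have "A > 0" "B > 0"
      unfolding A_def B_def by (auto intro!: sum_nonneg order.not_eq_order_implies_strict)
    define \<alpha> where "\<alpha> = A powr (1/p)"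
    define \<beta> where "\<beta> = B powr (1/q)"
    have "\<alpha> > 0" "\<beta> > 0" "\<alpha> powr p = A" "\<beta> powr q = B"
      using \<open>A > 0\<close> \<open>B > 0\<close> pq by (simp_all add: \<alpha>_def \<beta>_def powr_powr)
    have "f k * g k / (\<alpha> * \<beta>) \<le> f k powr p / (A * p) + g k powr q / (B * q)" if "k \<in> K" for k
    proof -
      have "(f k / \<alpha>) * (g k / \<beta>) \<le> (f k / \<alpha>) powr p / p + (g k / \<beta>) powr q / q"
        using pq f[OF that] g[OF that] \<open>\<alpha> > 0\<close> \<open>\<beta> > 0\<close> by (intro Youngs_inequality) auto
      then show ?thesis
        using f[OF that] g[OF that] \<open>\<alpha> > 0\<close> \<open>\<beta> > 0\<close> \<open>\<alpha> powr p = A\<close> \<open>\<beta> powr q = B\<close>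
        by (simp add: powr_divide)
    qed
    then have "(\<Sum>k\<in>K. f k * g k) / (\<alpha> * \<beta>)
        \<le> (\<Sum>k\<in>K. f k powr p / (A * p) + g k powr q / (B * q))"
      unfolding sum_divide_distrib by (intro sum_mono)
    also have "\<dots> = A / (A * p) + B / (B * q)"
      unfolding A_def B_def by (simp add: sum.distrib sum_divide_distrib)
    also have "\<dots> = 1"
      using \<open>A > 0\<close> \<open>B > 0\<close> pq by simp
    finally show ?thesis
      using \<open>\<alpha> > 0\<close> \<open>\<beta> > 0\<close> by (simp add: divide_le_eq \<alpha>_def \<beta>_def A_def B_def)
  qed
qed

lemma multinomial_support_le: "z \<in> multinomial_support n N \<Longrightarrow> z i \<le> N"
  using member_le_sum[of i "{..<n}" z] by (cases "i < n") (auto simp: multinomial_support_def)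

lemma inj_on_restrict_multinomial_support:
  "inj_on (\<lambda>z. restrict z {..<n}) (multinomial_support n N)"
proof (rule inj_onI, rule ext)
  fix y z i
  assume "y \<in> multinomial_support n N" "z \<in> multinomial_support n N"
    and "restrict y {..<n} = restrict z {..<n}"
  then show "y i = z i"
    by (cases "i < n") (auto simp: multinomial_support_def dest: fun_cong[of _ _ i])
qed

lemma restrict_multinomial_support_subset:
  "(\<lambda>z. restrict z {..<n}) ` multinomial_support n N \<subseteq> (\<Pi>\<^sub>E i\<in>{..<n}. {..N})"
  by (rule image_subsetI) (auto simp only: restrict_PiE_iff atMost_iff intro: multinomial_support_le)

lemma finite_multinomial_support: "finite (multinomial_support n N)"
  using inj_on_restrict_multinomial_support restrict_multinomial_support_subset
  by (metis finite_PiE finite_atMost finite_lessThan finite_subset finite_imageD)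

lemma sum_prod_multinomial_support_le:
  fixes F :: "nat \<Rightarrow> real"
  assumes "\<And>k. F k \<ge> 0"
  shows "(\<Sum>z\<in>multinomial_support n N. \<Prod>i<n. F (z i)) \<le> (\<Sum>k\<le>N. F k) ^ n"
proof -
  let ?e = "\<lambda>z. restrict z {..<n}"
  have "(\<Sum>z\<in>multinomial_support n N. \<Prod>i<n. F (z i))
      = (\<Sum>x\<in>?e ` multinomial_support n N. \<Prod>i<n. F (x i))"
    by (simp add: sum.reindex[OF inj_on_restrict_multinomial_support])
  also have "\<dots> \<le> (\<Sum>x\<in>(\<Pi>\<^sub>E i\<in>{..<n}. {..N}). \<Prod>i<n. F (x i))"
    using assms by (intro sum_mono2 restrict_multinomial_support_subset)
      (auto intro: prod_nonneg finite_PiE)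
  also have "\<dots> = (\<Sum>k\<le>N. F k) ^ n"
    using prod_sum_PiE[of "{..<n}" "\<lambda>_. {..N}" "\<lambda>_ k. F k"] by simp
  finally show ?thesis .
qed

lemma sum_prod_multinomial_support_le_tilted:
  fixes F :: "nat \<Rightarrow> real"
  assumes "\<And>k. F k \<ge> 0" and "w > 0"
  shows "(\<Sum>z\<in>multinomial_support n N. \<Prod>i<n. F (z i))
           \<le> (\<Sum>k\<le>N. F k * w ^ k) ^ n / w ^ N"
proof -
  have "(\<Prod>i<n. F (z i)) = (\<Prod>i<n. F (z i) * w ^ z i) / w ^ N"
    if "z \<in> multinomial_support n N" for z
    using that \<open>w > 0\<close>
    by (simp add: prod.distrib multinomial_support_def flip: power_sum)
  then have "(\<Sum>z\<in>multinomial_support n N. \<Prod>i<n. F (z i))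
      = (\<Sum>z\<in>multinomial_support n N. \<Prod>i<n. F (z i) * w ^ z i) / w ^ N"
    by (simp add: sum_divide_distrib)
  also have "\<dots> \<le> (\<Sum>k\<le>N. F k * w ^ k) ^ n / w ^ N"
    using assms by (intro divide_right_mono sum_prod_multinomial_support_le) auto
  finally show ?thesis .
qed

definition stirling_weight :: "nat \<Rightarrow> real" where
  "stirling_weight k = real k ^ k / (fact k * exp (real k))"

lemma stirling_weight_nonneg: "stirling_weight k \<ge> 0"
  by (simp add: stirling_weight_def)

lemma stirling_weight_powr_le:
  assumes "k \<ge> 1" "q > 0"
  shows "stirling_weight k powr q \<le> (2*pi) powr (-q/2) * (1 / real k powr (q/2))"
proof -
  have "stirling_weight k \<le> 1 / sqrt (2*pi*real k)"
    using fact_ge_stirling[OF assms(1)] assms(1)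
    by (simp add: stirling_weight_def field_simps)
  then have "stirling_weight k powr q \<le> (1 / sqrt (2*pi*real k)) powr q"
    using assms(2) stirling_weight_nonneg by (intro powr_mono2) auto
  also have "\<dots> = (2*pi) powr (-q/2) * (1 / real k powr (q/2))"
    using assms(1)
    by (simp add: powr_half_sqrt[symmetric] powr_powr powr_mult powr_minus_divide powr_divide)
  finally show ?thesis .
qed

lemma summable_zeta_real:
  assumes "s > 1"
  shows "summable (\<lambda>k. 1 / real (Suc k) powr s)"
proof -
  have "summable (\<lambda>k. real k powr (-s))"
    using summable_real_powr_iff assms by simp
  then have "summable (\<lambda>k. real (Suc k) powr (-s))"
    by (subst summable_Suc_iff)
  then show ?thesis
    by (simp add: powr_minus_divide)
qed

lemma zeta_real_nonneg: "s > 1 \<Longrightarrow> zeta_real s \<ge> 0"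
  unfolding zeta_real_def by (intro suminf_nonneg summable_zeta_real) auto

lemma sum_stirling_weight_powr_le:
  assumes "q > 2"
  shows "(\<Sum>k\<le>N. stirling_weight k powr q) \<le> 1 + (2*pi) powr (-q/2) * zeta_real (q/2)"
proof -
  have "(\<Sum>k\<le>N. stirling_weight k powr q)
      = stirling_weight 0 powr q + (\<Sum>k<N. stirling_weight (Suc k) powr q)"
    by (simp only: lessThan_Suc_atMost[symmetric] sum.lessThan_Suc_shift)
  also have "stirling_weight 0 powr q = 1"
    by (simp add: stirling_weight_def)
  also have "(\<Sum>k<N. stirling_weight (Suc k) powr q)
      \<le> (\<Sum>k<N. (2*pi) powr (-q/2) * (1 / real (Suc k) powr (q/2)))"
    using assms by (intro sum_mono stirling_weight_powr_le) auto
  also have "\<dots> \<le> (2*pi) powr (-q/2) * zeta_real (q/2)"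
    unfolding zeta_real_def sum_distrib_left[symmetric] using assms
    by (intro mult_left_mono sum_le_suminf summable_zeta_real) auto
  finally show ?thesis by simp
qed

section \<open>The multinomial probability of a large divergence\<close>

lemma power_le_exp_kl_term:
  fixes p :: real and z N :: nat
  assumes "p \<ge> 0" "N > 0"
  defines "x \<equiv> real z / real N"
  shows "p ^ z \<le> exp (- real N * (if x = 0 then 0 else x * ln (x / p))) * x ^ z"
proof (cases "z = 0 \<or> p = 0")
  case True
  \<comment> \<open>for \<open>p = 0 < z\<close> the right-hand side involves the junk value \<open>ln (x / 0) = 0\<close>,
    but the left-hand side vanishes\<close>
  then show ?thesis using assms by (auto simp: x_def)
next
  case False
  then have "x > 0" "p > 0" "real N * x = real z"
    using assms by (auto simp: x_def)
  then have "- real N * (x * ln (x / p)) = real z * ln (p / x)"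
    by (simp add: ln_div flip: mult.assoc) (simp add: algebra_simps)
  then have "exp (- real N * (x * ln (x / p))) = exp (ln (p / x)) ^ z"
    by (simp add: exp_of_nat_mult[symmetric])
  also have "\<dots> * x ^ z = p ^ z"
    using \<open>x > 0\<close> \<open>p > 0\<close> by (simp add: power_divide)
  finally show ?thesis
    using \<open>x > 0\<close> by simp
qed

lemma multinomial_pmf_le:
  assumes "prob_simplex n p" and z: "z \<in> multinomial_support n N" and "N > 0"
  shows "multinomial_pmf n N p z
           \<le> fact N * exp (real N) / real N ^ N
             * exp (- real N * kl_div n (\<lambda>i. real (z i) / real N) p)
             * (\<Prod>i<n. stirling_weight (z i))"
proof -
  define x where "x i = real (z i) / real N" for i
  define t where "t i = (if x i = 0 then 0 else x i * ln (x i / p i))" for i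
  have "(\<Sum>i<n. z i) = N"
    using z by (simp add: multinomial_support_def)
  have "(\<Prod>i<n. p i ^ z i) \<le> (\<Prod>i<n. exp (- real N * t i) * x i ^ z i)"
    using assms(1) \<open>N > 0\<close> unfolding prob_simplex_def t_def x_def
    by (intro prod_mono conjI power_le_exp_kl_term) auto
  also have "\<dots> = exp (- real N * (\<Sum>i<n. t i)) * (\<Prod>i<n. real (z i) ^ z i) / real N ^ N"
    by (simp add: x_def prod.distrib exp_sum sum_distrib_left power_divide prod_dividef
        flip: power_sum \<open>(\<Sum>i<n. z i) = N\<close>)
  finally have p_le: "(\<Prod>i<n. p i ^ z i) \<le> \<dots>" .
  have "(\<Prod>i<n. real (z i) ^ z i)
      = (\<Prod>i<n. fact (z i) * exp (real (z i)) * stirling_weight (z i))"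
    by (simp add: stirling_weight_def)
  also have "\<dots> = (\<Prod>i<n. fact (z i)) * exp (real N) * (\<Prod>i<n. stirling_weight (z i))"
    by (simp add: prod.distrib exp_sum flip: \<open>(\<Sum>i<n. z i) = N\<close>)
  moreover have fact_pos: "(\<Prod>i<n. fact (z i) :: real) > 0"
    by (intro prod_pos) auto
  moreover have "multinomial_pmf n N p z \<le> fact N / (\<Prod>i<n. fact (z i))
      * (exp (- real N * (\<Sum>i<n. t i)) * (\<Prod>i<n. real (z i) ^ z i) / real N ^ N)"
    unfolding multinomial_pmf_def using fact_pos by (intro mult_left_mono p_le) auto
  ultimately show ?thesis
    unfolding kl_div_def t_def[symmetric] x_def[symmetric] by (simp add: field_simps)
qed

lemma multinomial_prob_kl_ge_le:
  assumes "prob_simplex n p" "N > 0"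
  shows "multinomial_prob n N p (\<lambda>z. c \<le> kl_div n (\<lambda>i. real (z i) / real N) p)
       \<le> fact N * exp (real N) / real N ^ N * exp (- real N * c)
         * (\<Sum>z\<in>multinomial_support n N. \<Prod>i<n. stirling_weight (z i))"
proof -
  define C where "C = fact N * exp (real N) / real N ^ N * exp (- real N * c)"
  define W where "W z = (\<Prod>i<n. stirling_weight (z i))" for z :: "nat \<Rightarrow> nat"
  have "C \<ge> 0" "\<And>z. W z \<ge> 0"
    by (simp_all add: C_def W_def prod_nonneg stirling_weight_nonneg)
  have "multinomial_pmf n N p z \<le> C * W z"
    if "z \<in> multinomial_support n N" "c \<le> kl_div n (\<lambda>i. real (z i) / real N) p" for z
  proof -
    have "multinomial_pmf n N p z \<le> fact N * exp (real N) / real N ^ N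
        * exp (- real N * kl_div n (\<lambda>i. real (z i) / real N) p) * W z"
      unfolding W_def using multinomial_pmf_le[OF assms(1) that(1) assms(2)] .
    also have "\<dots> \<le> C * W z"
      unfolding C_def using that(2) \<open>W z \<ge> 0\<close>
      by (intro mult_right_mono mult_left_mono) (auto intro: mult_left_mono)
    finally show ?thesis .
  qed
  then have "multinomial_prob n N p (\<lambda>z. c \<le> kl_div n (\<lambda>i. real (z i) / real N) p)
      \<le> (\<Sum>z\<in>{z\<in>multinomial_support n N. c \<le> kl_div n (\<lambda>i. real (z i) / real N) p}. C * W z)"
    unfolding multinomial_prob_def by (intro sum_mono) auto
  also have "\<dots> \<le> (\<Sum>z\<in>multinomial_support n N. C * W z)"
    using \<open>C \<ge> 0\<close> \<open>\<And>z. W z \<ge> 0\<close> by (intro sum_mono2 finite_multinomial_support) auto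
  finally show ?thesis
    by (simp add: C_def W_def sum_distrib_left)
qed

definition Delta_term :: "real \<Rightarrow> real \<Rightarrow> real" where
  "Delta_term r q =
     (1 - 1/q) * Psi r + (1/q) * ln (1 + (2*pi) powr (-q/2) * zeta_real (q/2))"

lemma Delta_eq_Inf_Delta_term: "Delta r = Inf (Delta_term r ` {2<..})"
  by (simp add: Delta_def Delta_term_def)

lemma sum_stirling_weight_tilted_le:
  fixes r :: nat and q :: real
  assumes "r > 0" "q > 2"
  defines "w \<equiv> (real r / (1 + real r)) powr (1 - 1/q)"
  shows "(\<Sum>k\<le>N. stirling_weight k * w ^ k) \<le> w ^ r * exp (Delta_term (real r) q)"
proof -
  define y where "y = real r / (1 + real r)"
  define q' where "q' = q / (q - 1)"
  define Z where "Z = 1 + (2*pi) powr (-q/2) * zeta_real (q/2)"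
  have y: "0 < y" "y < 1" using assms(1) by (auto simp: y_def)
  have q': "q' > 1" "1/q + 1/q' = 1" "1/q' = 1 - 1/q"
    using assms(2) by (auto simp: q'_def field_simps)
  have "Z > 0"
    using zeta_real_nonneg[of "q/2"] assms(2) by (simp add: Z_def add_pos_nonneg)
  have "(1 - 1/q) * q' = 1"
    unfolding q'(3)[symmetric] using q'(1) by simp
  then have "(w ^ k) powr q' = y ^ k" for k
    using y by (simp add: w_def y_def[symmetric] powr_power powr_powr mult.assoc powr_realpow)
  then have "(\<Sum>k\<le>N. (w ^ k) powr q') \<le> 1 / (1 - y)"
    using y by (simp add: sum_le_suminf suminf_geometric[symmetric])
  also have "1 / (1 - y) = 1 + real r"
    by (simp add: y_def field_simps)
  finally have geometric: "(\<Sum>k\<le>N. (w ^ k) powr q') \<le> 1 + real r" .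
  have "(\<Sum>k\<le>N. stirling_weight k * w ^ k)
      \<le> (\<Sum>k\<le>N. stirling_weight k powr q) powr (1/q) * (\<Sum>k\<le>N. (w ^ k) powr q') powr (1/q')"
    using assms(2) q' by (intro Holder_inequality_sum) (auto simp: stirling_weight_nonneg w_def)
  also have "\<dots> \<le> Z powr (1/q) * (1 + real r) powr (1 - 1/q)"
    unfolding q'(3)[symmetric]
    using assms(2) q' geometric sum_stirling_weight_powr_le[OF assms(2)]
    by (intro mult_mono powr_mono2) (auto simp: Z_def intro: sum_nonneg)
  also have "\<dots> = exp (ln Z / q + (1 - 1/q) * ln (1 + real r))"
    using \<open>Z > 0\<close> by (simp add: powr_def exp_add)
  also have "\<dots> = exp (real r * ((1 - 1/q) * (ln (real r) - ln (1 + real r)))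
                        + Delta_term (real r) q)"
    unfolding Delta_term_def Psi_def Z_def[symmetric] by (simp add: algebra_simps)
  also have "\<dots> = w ^ r * exp (Delta_term (real r) q)"
    using assms(1) by (simp add: w_def powr_def ln_div exp_add exp_of_nat_mult)
  finally show ?thesis .
qed

lemma multinomial_prob_kl_ge_le_Delta_term:
  assumes "n > 0" "r > 0" "prob_simplex n p" "q > 2"
  shows "multinomial_prob n (n*r) p (\<lambda>z. c \<le> kl_div n (\<lambda>i. real (z i) / real (n*r)) p)
       \<le> fact (n*r) * exp (real (n*r)) / real (n*r) ^ (n*r) * exp (- real (n*r) * c)
         * exp (real n * Delta_term (real r) q)"
proof -
  define w where "w = (real r / (1 + real r)) powr (1 - 1/q)"
  have "w > 0" using assms(2) by (simp add: w_def)
  have "(\<Sum>z\<in>multinomial_support n (n*r). \<Prod>i<n. stirling_weight (z i))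
      \<le> (\<Sum>k\<le>n*r. stirling_weight k * w ^ k) ^ n / w ^ (n*r)"
    using \<open>w > 0\<close> by (intro sum_prod_multinomial_support_le_tilted stirling_weight_nonneg)
  also have "\<dots> \<le> (w ^ r * exp (Delta_term (real r) q)) ^ n / w ^ (n*r)"
    using \<open>w > 0\<close> sum_stirling_weight_tilted_le[OF assms(2,4)]
    by (intro divide_right_mono power_mono)
      (auto simp: w_def intro!: sum_nonneg mult_nonneg_nonneg stirling_weight_nonneg)
  also have "\<dots> = exp (real n * Delta_term (real r) q)"
    using \<open>w > 0\<close>
    by (simp add: power_mult_distrib power_mult mult.commute[of n r] exp_of_nat_mult)
  finally have "(\<Sum>z\<in>multinomial_support n (n*r). \<Prod>i<n. stirling_weight (z i))
      \<le> exp (real n * Delta_term (real r) q)" .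
  then show ?thesis
    using assms by (intro order.trans[OF multinomial_prob_kl_ge_le] mult_left_mono) auto
qed

lemma le_mult_exp_Inf:
  fixes f :: "'a \<Rightarrow> real"
  assumes "S \<noteq> {}" "B \<ge> 0" "c > 0"
    and bound: "\<And>x. x \<in> S \<Longrightarrow> P \<le> B * exp (c * f x)"
  shows "P \<le> B * exp (c * Inf (f ` S))"
proof (cases "P > 0")
  case False
  moreover have "B * exp (c * Inf (f ` S)) \<ge> 0"
    using assms(2) by simp
  ultimately show ?thesis by linarith
next
  case True
  obtain x0 where "x0 \<in> S" using assms(1) by blast
  then have "B > 0"
    using bound[of x0] True assms(2) by (cases "B = 0") auto
  have "ln (P / B) / c \<le> f x" if "x \<in> S" for x
  proof -
    have "ln (P / B) \<le> ln (exp (c * f x))"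
      using bound[OF that] True \<open>B > 0\<close> by (subst ln_le_cancel_iff) (auto simp: field_simps)
    then show ?thesis using \<open>c > 0\<close> by (simp add: divide_le_eq mult.commute)
  qed
  then have "ln (P / B) / c \<le> Inf (f ` S)"
    using assms(1) by (intro cInf_greatest) auto
  then have "P / B \<le> exp (c * Inf (f ` S))"
    using True \<open>B > 0\<close> \<open>c > 0\<close>
    by (subst ln_le_cancel_iff[symmetric]) (auto simp: divide_le_eq mult.commute)
  then show ?thesis
    using \<open>B > 0\<close> by (simp add: divide_le_eq mult.commute)
qed

lemma fact_mult_exp_div_power_le:
  assumes "N \<ge> 1"
  shows "fact N * exp (real N) / real N ^ N \<le> sqrt (2 * pi * exp 1 * real N)"
proof -
  have "fact N * exp (real N) / real N ^ N \<le> exp 1 * sqrt (real N)"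
    using fact_le_stirling[OF assms] assms by (simp add: field_simps)
  also have "\<dots> = sqrt (exp 1 * exp 1 * real N)"
    by (simp add: real_sqrt_mult)
  also have "\<dots> \<le> sqrt (2 * pi * exp 1 * real N)"
    using exp_le pi_gt3 by (intro real_sqrt_le_mono mult_right_mono) auto
  finally show ?thesis .
qed

theorem lemma1:
  fixes n r :: nat and p :: "nat \<Rightarrow> real" and \<mu> :: real
  assumes "n > 0" and "r > 0" and "prob_simplex n p" and "\<mu> > 0"
  shows "multinomial_prob n (n*r) p
           (\<lambda>z. kl_div n (\<lambda>i. real (z i) / real (n*r)) p \<ge> (Delta (real r) + \<mu>) / real r)
         \<le> sqrt (2 * pi * exp 1 * real n * real r) * exp (- real n * \<mu>)"
proof -
  define N where "N = n * r"
  define c where "c = (Delta (real r) + \<mu>) / real r"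
  define C where "C = fact N * exp (real N) / real N ^ N"
  have "multinomial_prob n N p (\<lambda>z. c \<le> kl_div n (\<lambda>i. real (z i) / real N) p)
      \<le> C * exp (- real N * c) * exp (real n * Inf (Delta_term (real r) ` {2<..}))"
    using multinomial_prob_kl_ge_le_Delta_term[OF assms(1-3)] assms(1)
    by (intro le_mult_exp_Inf) (auto simp: N_def C_def)
  also have "\<dots> = C * exp (- real n * \<mu>)"
    using assms(2) by (simp add: c_def N_def field_simps flip: Delta_eq_Inf_Delta_term exp_add)
  also have "\<dots> \<le> sqrt (2 * pi * exp 1 * real n * real r) * exp (- real n * \<mu>)"
    using fact_mult_exp_div_power_le[of N] assms(1,2)
    by (intro mult_right_mono) (auto simp: C_def N_def mult.assoc)
  finally show ?thesis
    by (simp add: N_def c_def)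
qed

end
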